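(* Let $\mathcal{T}$ be a set of pairwise disjoint non-vertical (closed) triangles in $\mathbb{R}^3$, and let $\mathcal{E}$ be the set of edges of the triangles in $\mathcal{T}$. Let $\Delta$ be an open convex polygon in the $xy$-plane and let $C_\Delta := \Delta\times(-\infty,+\infty)$ be the corresponding column. Suppose that $C_\Delta$ contains no vertex of any triangle of $\mathcal{T}$. Let $\mathcal{T}_\Delta := \{T\cap C_\Delta : T\in\mathcal{T}\}$ and $\mathcal{E}_\Delta := \{e\cap C_\Delta : e\in\mathcal{E}\}$. If $\mathcal{E}_\Delta$ admits a depth order, then $\mathcal{T}_\Delta$ admits a depth order.
   Context: For disjoint objects $o,o'$ in $\mathbb{R}^3$, write $o\prec o'$ ($o$ is below $o'$) if there is a vertical line $\ell$ (parallel to the $z$-axis) meeting both $o$ and $o'$ such that the point(s) of $\ell\cap o$ have smaller $z$-coordinate than those of $\ell\cap o'$. Two objects whose vertical projections onto the $xy$-plane are disjoint are unrelated. A depth order of a finite set of objects $o_1,\dots,o_m$ is a total ordering $o_{\pi(1)},\dots,o_{\pi(m)}$ such that $o_{\pi(i)}\prec o_{\pi(j)}$ implies $i<j$; a set admitting a depth order is called acyclic. *)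

theory Defs
  imports "HOL-Analysis.Analysis"
begin

type_synonym point3 = "real \<times> real \<times> real"

definition xy :: "point3 \<Rightarrow> real \<times> real" where
  "xy p = (fst p, fst (snd p))"

definition zc :: "point3 \<Rightarrow> real" where
  "zc p = snd (snd p)"

definition below :: "point3 set \<Rightarrow> point3 set \<Rightarrow> bool" where
  "below o1 o2 \<longleftrightarrow> (\<exists>q. (\<exists>p\<in>o1. xy p = q) \<and> (\<exists>p\<in>o2. xy p = q) \<and>
      (\<forall>p\<in>o1. \<forall>p'\<in>o2. xy p = q \<longrightarrow> xy p' = q \<longrightarrow> zc p < zc p'))"

definition is_depth_order :: "point3 set list \<Rightarrow> point3 set set \<Rightarrow> bool" where
  "is_depth_order xs S \<longleftrightarrow> distinct xs \<and> set xs = S \<and>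
     (\<forall>i<length xs. \<forall>j<length xs. below (xs ! i) (xs ! j) \<longrightarrow> i < j)"

definition admits_depth_order :: "point3 set set \<Rightarrow> bool" where
  "admits_depth_order S \<longleftrightarrow> finite S \<and> (\<exists>xs. is_depth_order xs S)"

text \<open>Triangles are given by their vertex sets V (three points); the triangle is
  convex hull V, non-vertical means the projected vertices are not collinear.\<close>
definition nonvertical_triangle :: "point3 set \<Rightarrow> bool" where
  "nonvertical_triangle V \<longleftrightarrow> card V = 3 \<and> \<not> collinear (xy ` V)"

definition edges_of :: "point3 set set \<Rightarrow> point3 set set" where
  "edges_of Vs = {convex hull {a, b} | a b V. V \<in> Vs \<and> a \<in> V \<and> b \<in> V \<and> a \<noteq> b}"

definition column :: "(real \<times> real) set \<Rightarrow> point3 set" where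
  "column D = {p. xy p \<in> D}"

definition open_convex_polygon :: "(real \<times> real) set \<Rightarrow> bool" where
  "open_convex_polygon D \<longleftrightarrow> D \<noteq> {} \<and> (\<exists>P. finite P \<and> D = interior (convex hull P))"

end

theory Submission
  imports Defs
begin

text \<open>
  All triangle and edge pieces in the column are convex graphs over their projections. If
  two of them are related at one common projected point but not at another, the vertical gap
  between them vanishes somewhere, so they meet and lie on a common triangle, where neither
  is below the other. Hence the order of two pieces is the same above all their common
  points.

  Take a cycle of pieces containing a triangle piece t, with predecessor a and successor b.
  If a, t, b share a projected point, a is below b and t can be dropped. If some other member
  of the cycle overlaps t in projection, the cycle can be cut short there. Otherwise the
  chain from b back to a leaves the projected triangle of t through some side; since the
  column is convex and contains no vertex, the line of that side stays inside the triangle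
  within the column, so a crosses that side and the edge piece on it lies above a and below
  b, and it replaces t. Each step lowers the number of triangle pieces or the length of the
  cycle, so a cycle of pieces would lead to a cycle of edge pieces, which the depth order of
  the edges forbids. A finite acyclic relation has a depth order.
\<close>

section \<open>Heights of sets that are graphs over their projection\<close>

lemma xy_add_scaleR: "xy (a *\<^sub>R p + b *\<^sub>R q) = a *\<^sub>R xy p + b *\<^sub>R xy q"
  by (simp add: xy_def)

lemma xy_add3_scaleR: "xy (a *\<^sub>R p + b *\<^sub>R q + c *\<^sub>R r) = a *\<^sub>R xy p + b *\<^sub>R xy q + c *\<^sub>R xy r"
  by (simp add: xy_def)

lemma zc_add_scaleR: "zc (a *\<^sub>R p + b *\<^sub>R q) = a * zc p + b * zc q"
  by (simp add: zc_def)

lemma point3_eqI: "xy p = xy p' \<Longrightarrow> zc p = zc p' \<Longrightarrow> p = p'"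
  by (cases p; cases p') (auto simp: xy_def zc_def)

lemma convex_xy_image: "convex X \<Longrightarrow> convex (xy ` X)"
  by (rule convex_linear_image) (unfold_locales, auto simp: xy_def)

definition lift :: "point3 set \<Rightarrow> real \<times> real \<Rightarrow> point3" where
  "lift X q = (THE p. p \<in> X \<and> xy p = q)"

abbreviation height :: "point3 set \<Rightarrow> real \<times> real \<Rightarrow> real" where
  "height X q \<equiv> zc (lift X q)"

lemma lift_eqI: "inj_on xy X \<Longrightarrow> p \<in> X \<Longrightarrow> xy p = q \<Longrightarrow> lift X q = p"
  unfolding lift_def by (rule the_equality) (auto dest: inj_onD)

lemma lift_in:
  assumes "inj_on xy X" "q \<in> xy ` X"
  shows "lift X q \<in> X" and "xy (lift X q) = q"
proof -
  obtain p where "p \<in> X" "xy p = q" using assms(2) by auto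
  then show "lift X q \<in> X" "xy (lift X q) = q" using lift_eqI[OF assms(1)] by auto
qed

lemma lift_subset: "inj_on xy Z \<Longrightarrow> X \<subseteq> Z \<Longrightarrow> q \<in> xy ` X \<Longrightarrow> lift X q = lift Z q"
  by (metis imageE inj_on_subset lift_eqI subsetD)

lemma below_iff_height:
  assumes "inj_on xy X" "inj_on xy Y"
  shows "below X Y \<longleftrightarrow> (\<exists>q \<in> xy ` X \<inter> xy ` Y. height X q < height Y q)"
proof
  assume "below X Y"
  then obtain q p p' where "p \<in> X" "xy p = q" "p' \<in> Y" "xy p' = q"
    "\<forall>p\<in>X. \<forall>p'\<in>Y. xy p = q \<longrightarrow> xy p' = q \<longrightarrow> zc p < zc p'"
    unfolding below_def by blast
  then show "\<exists>q \<in> xy ` X \<inter> xy ` Y. height X q < height Y q"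
    using lift_eqI assms by (metis IntI imageI)
next
  assume "\<exists>q \<in> xy ` X \<inter> xy ` Y. height X q < height Y q"
  then obtain q where q: "q \<in> xy ` X" "q \<in> xy ` Y" "height X q < height Y q" by blast
  show "below X Y" unfolding below_def
    using q lift_in[OF assms(1) q(1)] lift_in[OF assms(2) q(2)] lift_eqI assms by metis
qed

lemma below_irrefl: "\<not> below X X"
  unfolding below_def by auto

lemma below_subset_left:
  assumes "inj_on xy Z" "inj_on xy Y" "X \<subseteq> Z" "below X Y"
  shows "below Z Y"
proof -
  have "inj_on xy X" using assms(1,3) inj_on_subset by blast
  then obtain q where q: "q \<in> xy ` X" "q \<in> xy ` Y" "height X q < height Y q"
    using assms(2,4) below_iff_height by blast
  have "q \<in> xy ` Z" using q(1) assms(3) by blast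
  moreover have "height Z q < height Y q" using q lift_subset[OF assms(1,3) q(1)] by simp
  ultimately show ?thesis using q(2) below_iff_height[OF assms(1,2)] by blast
qed

lemma not_below_subsets:
  assumes "inj_on xy Z" "X \<subseteq> Z" "Y \<subseteq> Z"
  shows "\<not> below X Y"
proof
  assume "below X Y"
  moreover have "inj_on xy X" "inj_on xy Y" using assms inj_on_subset by blast+
  ultimately obtain q where "q \<in> xy ` X" "q \<in> xy ` Y" "height X q < height Y q"
    using below_iff_height by blast
  then show False using lift_subset[OF assms(1,2)] lift_subset[OF assms(1,3)] by simp
qed

lemma lift_convex_combination:
  assumes "convex X" "inj_on xy X" "q \<in> xy ` X" "q' \<in> xy ` X" "0 \<le> s" "s \<le> 1"
  shows "lift X ((1 - s) *\<^sub>R q + s *\<^sub>R q') = (1 - s) *\<^sub>R lift X q + s *\<^sub>R lift X q'"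
proof (rule lift_eqI[OF assms(2)])
  show "(1 - s) *\<^sub>R lift X q + s *\<^sub>R lift X q' \<in> X"
    using assms lift_in(1)[OF assms(2)] by (intro convexD) auto
  show "xy ((1 - s) *\<^sub>R lift X q + s *\<^sub>R lift X q') = (1 - s) *\<^sub>R q + s *\<^sub>R q'"
    using lift_in(2)[OF assms(2)] assms(3,4) by (simp add: xy_add_scaleR)
qed

text \<open>The vertical gap between Y and X is affine along segments of the common projection,
  positive at some point and nonpositive at q, so it vanishes in between.\<close>
lemma meet_if_below_reversed:
  assumes X: "convex X" "inj_on xy X" and Y: "convex Y" "inj_on xy Y"
    and "below X Y" and q: "q \<in> xy ` X" "q \<in> xy ` Y" and "height Y q \<le> height X q"
  shows "X \<inter> Y \<noteq> {}"
proof -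
  obtain q0 where q0: "q0 \<in> xy ` X" "q0 \<in> xy ` Y" "height X q0 < height Y q0"
    using assms(5) below_iff_height[OF X(2) Y(2)] by blast
  define g0 where "g0 = height Y q0 - height X q0"
  define g1 where "g1 = height Y q - height X q"
  define s where "s = g0 / (g0 - g1)"
  define r where "r = (1 - s) *\<^sub>R q0 + s *\<^sub>R q"
  have g: "g0 > 0" "g1 \<le> 0" using q0 assms(8) by (auto simp: g0_def g1_def)
  then have s: "0 \<le> s" "s \<le> 1" by (auto simp: s_def divide_simps)
  have gap: "(1 - s) * g0 + s * g1 = 0" using g by (simp add: s_def field_simps)
  have r: "r \<in> xy ` X" "r \<in> xy ` Y"
    unfolding r_def using s
    by (auto intro: convexD[OF convex_xy_image[OF X(1)] q0(1) q(1)]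
        convexD[OF convex_xy_image[OF Y(1)] q0(2) q(2)])
  have "height Y r = height X r"
    using gap unfolding r_def lift_convex_combination[OF X q0(1) q(1) s(1,2)]
      lift_convex_combination[OF Y q0(2) q(2) s(1,2)] zc_add_scaleR g0_def g1_def
    by (simp add: algebra_simps)
  then have "lift Y r = lift X r"
    using point3_eqI lift_in(2)[OF X(2) r(1)] lift_in(2)[OF Y(2) r(2)] by metis
  then show ?thesis using lift_in(1)[OF X(2) r(1)] lift_in(1)[OF Y(2) r(2)] by auto
qed

section \<open>Barycentric coordinates of a non-vertical triangle\<close>

definition affine2 :: "(real \<times> real \<Rightarrow> real) \<Rightarrow> bool" where
  "affine2 f \<longleftrightarrow> (\<exists>a b c. \<forall>q. f q = a + b * fst q + c * snd q)"

lemma affine2_combination: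
  assumes "affine2 f" "u + v + w = 1"
  shows "f (u *\<^sub>R x + v *\<^sub>R y + w *\<^sub>R z) = u * f x + v * f y + w * f z"
proof -
  obtain a b c where f: "\<And>q. f q = a + b * fst q + c * snd q"
    using assms(1) unfolding affine2_def by blast
  have "a = (u + v + w) * a" using assms(2) by simp
  then show ?thesis unfolding f by (simp add: algebra_simps)
qed

lemma affine2_segment:
  "affine2 f \<Longrightarrow> f ((1 - s) *\<^sub>R x + s *\<^sub>R y) = (1 - s) * f x + s * f y"
  using affine2_combination[of f "1 - s" s 0 x y 0] by simp

lemma affine2_zero_in_convex:
  assumes "convex U" "affine2 f" "y \<in> U" "w \<in> U" "f y < 0" "0 \<le> f w"
  obtains u where "u \<in> U" "f u = 0"
proof
  define s where "s = f y / (f y - f w)"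
  have "0 \<le> s" "s \<le> 1" using assms(5,6) by (auto simp: s_def divide_simps)
  then show "(1 - s) *\<^sub>R y + s *\<^sub>R w \<in> U"
    using assms(1,3,4) by (intro convexD) auto
  have "(1 - s) * f y + s * f w = 0"
    using assms(5,6) by (simp add: s_def field_simps)
  then show "f ((1 - s) *\<^sub>R y + s *\<^sub>R w) = 0"
    by (simp add: affine2_segment[OF assms(2)])
qed

definition cross2 :: "real \<times> real \<Rightarrow> real \<times> real \<Rightarrow> real" where
  "cross2 u w = fst u * snd w - snd u * fst w"

lemma affine2_cross2: "affine2 (\<lambda>q. cross2 (B - q) (C - q) / d)"
proof -
  obtain b1 b2 c1 c2 where "B = (b1, b2)" "C = (c1, c2)" by fastforce
  then have "cross2 (B - q) (C - q) / d =
      (b1 * c2 - b2 * c1) / d + (b2 - c2) / d * fst q + (c1 - b1) / d * snd q" for q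
    by (simp add: cross2_def field_simps diff_divide_distrib add_divide_distrib)
  then show ?thesis unfolding affine2_def by blast
qed

lemma cross2_nonzero_if_not_collinear:
  fixes A B C :: "real \<times> real"
  assumes "\<not> collinear {A, B, C}"
  shows "cross2 (B - A) (C - A) \<noteq> 0"
proof
  assume d: "cross2 (B - A) (C - A) = 0"
  define u where "u = A - B"
  define w where "w = C - B"
  have cw: "cross2 u w = 0" using d unfolding u_def w_def cross2_def by (simp add: algebra_simps)
  have "\<exists>c. w = c *\<^sub>R u" if "u \<noteq> 0"
  proof (cases "fst u = 0")
    case True
    then have "snd u \<noteq> 0" using that by (simp add: prod_eq_iff)
    then have "w = (snd w / snd u) *\<^sub>R u" using True cw by (simp add: cross2_def prod_eq_iff)
    then show ?thesis by blast
  next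
    case False
    then have "w = (fst w / fst u) *\<^sub>R u" using cw
      by (simp add: cross2_def prod_eq_iff field_simps)
    then show ?thesis by blast
  qed
  then have "collinear {0, u, w}" by (auto simp: collinear_lemma)
  then have "collinear {A, B, C}"
    using collinear_3[of A B C] unfolding u_def w_def by (simp add: NO_MATCH_def)
  then show False using assms by simp
qed

locale barycentric =
  fixes V :: "point3 set" and vt :: "nat \<Rightarrow> point3" and lam :: "nat \<Rightarrow> real \<times> real \<Rightarrow> real"
  assumes vertices: "V = {vt 0, vt 1, vt 2}"
    and vertices_distinct: "vt 0 \<noteq> vt 1" "vt 1 \<noteq> vt 2" "vt 0 \<noteq> vt 2"
    and affine: "affine2 (lam i)"
    and sum_eq_1: "lam 0 q + lam 1 q + lam 2 q = 1"
    and reconstruct: "lam 0 q *\<^sub>R xy (vt 0) + lam 1 q *\<^sub>R xy (vt 1) + lam 2 q *\<^sub>R xy (vt 2) = q"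
    and at_vertex: "i < 3 \<Longrightarrow> j < 3 \<Longrightarrow> lam i (xy (vt j)) = (if i = j then 1 else 0)"

lemma barycentric_exists:
  assumes "nonvertical_triangle V"
  obtains vt lam where "barycentric V vt lam"
proof -
  obtain x y z where V: "V = {x, y, z}" "x \<noteq> y" "y \<noteq> z" "x \<noteq> z"
    using assms unfolding nonvertical_triangle_def card_3_iff by blast
  obtain a1 a2 b1 b2 c1 c2 where A: "xy x = (a1, a2)" and B: "xy y = (b1, b2)" and C: "xy z = (c1, c2)"
    by (metis surj_pair)
  define d where "d = cross2 (xy y - xy x) (xy z - xy x)"
  have "d \<noteq> 0"
    using assms V cross2_nonzero_if_not_collinear unfolding nonvertical_triangle_def d_def by simp
  define vt where "vt i = (if i = 0 then x else if i = 1 then y else z)" for i :: nat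
  \<comment> \<open>Cramer's rule: lam i q is the signed area spanned by q and the side opposite to vt i,
    divided by the signed area d of the whole projected triangle.\<close>
  define lam where "lam i = (if i = 0 then (\<lambda>q. cross2 (xy y - q) (xy z - q) / d)
      else if i = 1 then (\<lambda>q. cross2 (xy z - q) (xy x - q) / d)
      else (\<lambda>q. cross2 (xy x - q) (xy y - q) / d))" for i :: nat
  have "barycentric V vt lam"
  proof
    show "V = {vt 0, vt 1, vt 2}" "vt 0 \<noteq> vt 1" "vt 1 \<noteq> vt 2" "vt 0 \<noteq> vt 2"
      using V by (simp_all add: vt_def)
    show "affine2 (lam i)" for i by (simp add: lam_def affine2_cross2)
    fix q :: "real \<times> real"
    obtain q1 q2 where q: "q = (q1, q2)" by fastforce
    have "cross2 (xy y - q) (xy z - q) + cross2 (xy z - q) (xy x - q) + cross2 (xy x - q) (xy y - q) = d"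
      by (simp add: q A B C d_def cross2_def) algebra
    then show "lam 0 q + lam 1 q + lam 2 q = 1"
      using \<open>d \<noteq> 0\<close> by (simp add: lam_def add_divide_distrib[symmetric])
    have "cross2 (xy y - q) (xy z - q) * a1 + cross2 (xy z - q) (xy x - q) * b1
        + cross2 (xy x - q) (xy y - q) * c1 = d * q1"
      "cross2 (xy y - q) (xy z - q) * a2 + cross2 (xy z - q) (xy x - q) * b2
        + cross2 (xy x - q) (xy y - q) * c2 = d * q2"
      by (simp_all add: q A B C d_def cross2_def) algebra+
    then show "lam 0 q *\<^sub>R xy (vt 0) + lam 1 q *\<^sub>R xy (vt 1) + lam 2 q *\<^sub>R xy (vt 2) = q"
      using \<open>d \<noteq> 0\<close> by (simp add: lam_def vt_def q A B C field_simps)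
  next
    fix i j :: nat assume "i < 3" "j < 3"
    then have "i = 0 \<or> i = 1 \<or> i = 2" "j = 0 \<or> j = 1 \<or> j = 2" by auto
    then show "lam i (xy (vt j)) = (if i = j then 1 else 0)"
      using \<open>d \<noteq> 0\<close> by (auto simp: lam_def vt_def A B C d_def cross2_def field_simps)
  qed
  then show thesis by (rule that)
qed

context barycentric
begin

lemma coord_of_combination:
  assumes "u + v + w = 1" "i < 3"
  shows "lam i (xy (u *\<^sub>R vt 0 + v *\<^sub>R vt 1 + w *\<^sub>R vt 2)) =
    (if i = 0 then u else if i = 1 then v else w)"
  using assms at_vertex[OF assms(2)]
  by (auto simp: xy_add3_scaleR affine2_combination[OF affine])

lemma mem_hull_iff:
  "p \<in> convex hull V \<longleftrightarrow>
    (\<exists>u v w. 0 \<le> u \<and> 0 \<le> v \<and> 0 \<le> w \<and> u + v + w = 1 \<and> p = u *\<^sub>R vt 0 + v *\<^sub>R vt 1 + w *\<^sub>R vt 2)"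
  unfolding vertices convex_hull_3 by blast

lemma coord_nonneg:
  assumes "p \<in> convex hull V" "i < 3"
  shows "0 \<le> lam i (xy p)"
proof -
  obtain u v w where "0 \<le> u" "0 \<le> v" "0 \<le> w" "u + v + w = 1"
    and "p = u *\<^sub>R vt 0 + v *\<^sub>R vt 1 + w *\<^sub>R vt 2"
    using assms(1) unfolding mem_hull_iff by blast
  then show ?thesis using coord_of_combination[OF _ assms(2)] by simp
qed

lemma hull_point_eq:
  assumes "p \<in> convex hull V"
  shows "p = lam 0 (xy p) *\<^sub>R vt 0 + lam 1 (xy p) *\<^sub>R vt 1 + lam 2 (xy p) *\<^sub>R vt 2"
proof -
  obtain u v w where "u + v + w = 1" and p: "p = u *\<^sub>R vt 0 + v *\<^sub>R vt 1 + w *\<^sub>R vt 2"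
    using assms unfolding mem_hull_iff by blast
  then have "lam 0 (xy p) = u" "lam 1 (xy p) = v" "lam 2 (xy p) = w"
    using coord_of_combination[of u v w] by auto
  then show ?thesis using p by simp
qed

lemma inj_on_hull: "inj_on xy (convex hull V)"
proof (rule inj_onI)
  fix p p' assume "p \<in> convex hull V" "p' \<in> convex hull V" "xy p = xy p'"
  then show "p = p'" using hull_point_eq[of p] hull_point_eq[of p'] by simp
qed

lemma xy_hull_iff: "q \<in> xy ` (convex hull V) \<longleftrightarrow> (\<forall>i<3. 0 \<le> lam i q)"
proof
  assume "q \<in> xy ` (convex hull V)"
  then show "\<forall>i<3. 0 \<le> lam i q" using coord_nonneg by auto
next
  assume "\<forall>i<3. 0 \<le> lam i q"
  then have "0 \<le> lam 0 q" "0 \<le> lam 1 q" "0 \<le> lam 2 q" by simp_all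
  then have "lam 0 q *\<^sub>R vt 0 + lam 1 q *\<^sub>R vt 1 + lam 2 q *\<^sub>R vt 2 \<in> convex hull V"
    unfolding mem_hull_iff using sum_eq_1[of q] by blast
  moreover have "xy (lam 0 q *\<^sub>R vt 0 + lam 1 q *\<^sub>R vt 1 + lam 2 q *\<^sub>R vt 2) = q"
    using reconstruct[of q] by (simp add: xy_add3_scaleR)
  ultimately show "q \<in> xy ` (convex hull V)" by (metis image_eqI)
qed

lemma vertex_if_two_coords_zero:
  assumes "i < 3" "j < 3" "i \<noteq> j" "lam i q = 0" "lam j q = 0"
  shows "q \<in> xy ` V"
proof -
  have "i = 0 \<or> i = 1 \<or> i = 2" "j = 0 \<or> j = 1 \<or> j = 2" using assms by auto
  then have "q = xy (vt 0) \<or> q = xy (vt 1) \<or> q = xy (vt 2)"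
    using assms reconstruct[of q] sum_eq_1[of q] by auto
  then show ?thesis using vertices by auto
qed

lemma side_edge:
  assumes "i < 3"
  obtains a b where "a \<in> V" "b \<in> V" "a \<noteq> b"
    "\<And>p. p \<in> convex hull V \<Longrightarrow> lam i (xy p) = 0 \<Longrightarrow> p \<in> convex hull {a, b}"
proof -
  define j where "j = (i + 1) mod 3"
  define k where "k = (i + 2) mod 3"
  have i: "i = 0 \<or> i = 1 \<or> i = 2" using assms by auto
  have "vt j \<in> V" "vt k \<in> V" "vt j \<noteq> vt k"
    using i vertices vertices_distinct by (auto simp: j_def k_def numeral_2_eq_2)
  moreover have "p \<in> convex hull {vt j, vt k}" if p: "p \<in> convex hull V" "lam i (xy p) = 0" for p
  proof -
    have "p = lam j (xy p) *\<^sub>R vt j + lam k (xy p) *\<^sub>R vt k \<and> lam j (xy p) + lam k (xy p) = 1"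
      using i hull_point_eq[OF p(1)] sum_eq_1[of "xy p"] p(2)
      by (auto simp: j_def k_def numeral_2_eq_2 algebra_simps)
    moreover have "0 \<le> lam j (xy p)" "0 \<le> lam k (xy p)"
      using coord_nonneg[OF p(1)] by (simp_all add: j_def k_def)
    ultimately show ?thesis unfolding convex_hull_2 by blast
  qed
  ultimately show thesis by (rule that)
qed

text \<open>Along the line of a side, the projected triangle can only be left through a vertex,
  and the convex set D contains no projected vertex.\<close>
lemma side_point_in_hull:
  assumes "convex D" "xy ` V \<inter> D = {}" "i < 3"
    and z: "z \<in> D" "z \<in> xy ` (convex hull V)" "lam i z = 0"
    and w: "w \<in> D" "lam i w = 0"
  shows "w \<in> xy ` (convex hull V)"
proof (rule ccontr)
  assume "w \<notin> xy ` (convex hull V)"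
  then obtain j where j: "j < 3" "lam j w < 0" by (auto simp: xy_hull_iff not_le)
  have "0 \<le> lam j z" using z(2) j(1) by (simp add: xy_hull_iff)
  then obtain u where "u \<in> closed_segment w z" "lam j u = 0"
    using affine2_zero_in_convex[OF convex_closed_segment affine _ _ j(2)] by blast
  moreover have "lam i u = 0"
    using calculation(1) z(3) w(2) by (auto simp: closed_segment_def affine2_segment[OF affine])
  moreover have "u \<in> D"
    using calculation(1) assms(1) z(1) w(1) closed_segment_subset by blast
  moreover have "i \<noteq> j" using w(2) j(2) by auto
  ultimately have "u \<in> xy ` V \<inter> D"
    using vertex_if_two_coords_zero[OF assms(3) j(1)] by blast
  then show False using assms(2) by blast
qed

text \<open>The exit point is the first point, on the way from q to y, where the segment crosses
  one of the side lines that separate y from the triangle.\<close>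
lemma exit_through_side:
  assumes "convex U" "q \<in> U" "q \<in> xy ` (convex hull V)" "y \<in> U" "y \<notin> xy ` (convex hull V)"
  obtains i z where "i < 3" "z \<in> U" "z \<in> xy ` (convex hull V)" "lam i z = 0" "lam i y < 0"
proof -
  define S where "S = {m. m < 3 \<and> lam m y < 0}"
  define f where "f m = lam m q / (lam m q - lam m y)" for m
  have "finite S" "S \<noteq> {}" using assms(5) xy_hull_iff by (auto simp: S_def not_le)
  then obtain i where i: "i \<in> S" "\<And>m. m \<in> S \<Longrightarrow> f i \<le> f m"
    using ex_is_arg_min_if_finite[of S f] unfolding is_arg_min_def by (metis not_le)
  have q: "0 \<le> lam m q" if "m < 3" for m using assms(3) xy_hull_iff that by blast
  have "i < 3" "lam i y < 0" using i by (auto simp: S_def)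
  then have s: "0 \<le> f i" "f i \<le> 1" using q[of i] by (auto simp: f_def divide_simps)
  define z where "z = (1 - f i) *\<^sub>R q + f i *\<^sub>R y"
  have lz: "lam m z = (1 - f i) * lam m q + f i * lam m y" for m
    by (simp add: z_def affine2_segment[OF affine])
  have "z \<in> U" using s assms(1,2,4) unfolding z_def by (intro convexD) auto
  moreover have "lam i z = 0" using q[of i] \<open>i < 3\<close> \<open>lam i y < 0\<close> by (simp add: lz f_def field_simps)
  moreover have "0 \<le> lam m z" if m: "m < 3" for m
  proof (cases "lam m y < 0")
    case True
    then have "f i \<le> f m" using i m by (simp add: S_def)
    then have "f i * (lam m q - lam m y) \<le> lam m q"
      using True q[OF m] by (simp add: f_def field_simps)
    then show ?thesis by (simp add: lz algebra_simps)
  qed (use s q[OF m] in \<open>simp add: lz\<close>)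
  ultimately show thesis
    using that[OF \<open>i < 3\<close>] \<open>lam i y < 0\<close> by (simp add: xy_hull_iff)
qed

end

section \<open>Walks and depth orders\<close>

fun walk :: "('a \<Rightarrow> 'a \<Rightarrow> bool) \<Rightarrow> 'a \<Rightarrow> 'a list \<Rightarrow> 'a \<Rightarrow> bool" where
  "walk r x [] y \<longleftrightarrow> r x y"
| "walk r x (p # ps) y \<longleftrightarrow> r x p \<and> walk r p ps y"

lemma walk_append: "walk r x (us @ p # ws) y \<longleftrightarrow> walk r x us p \<and> walk r p ws y"
  by (induction us arbitrary: x) auto

lemma walk_snoc: "walk r x (us @ [p]) y \<longleftrightarrow> walk r x us p \<and> r p y"
  by (simp add: walk_append)

lemma walk_rotate: "walk r x (us @ t # vs) x \<Longrightarrow> walk r t (vs @ x # us) t"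
  by (simp add: walk_append)

lemma trancl_iff_walk:
  "(x, y) \<in> {(x, y). x \<in> S \<and> y \<in> S \<and> r x y}\<^sup>+ \<longleftrightarrow>
    x \<in> S \<and> y \<in> S \<and> (\<exists>ps. set ps \<subseteq> S \<and> walk r x ps y)"
proof
  assume "(x, y) \<in> {(x, y). x \<in> S \<and> y \<in> S \<and> r x y}\<^sup>+"
  then show "x \<in> S \<and> y \<in> S \<and> (\<exists>ps. set ps \<subseteq> S \<and> walk r x ps y)"
  proof (induction rule: trancl_induct)
    case (base y)
    then have "set [] \<subseteq> S \<and> walk r x [] y" by simp
    then show ?case using base by blast
  next
    case (step y z)
    then obtain ps where "set ps \<subseteq> S" "walk r x ps y" by blast
    then have "set (ps @ [y]) \<subseteq> S \<and> walk r x (ps @ [y]) z" using step by (simp add: walk_snoc)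
    then show ?case using step by blast
  qed
next
  assume "x \<in> S \<and> y \<in> S \<and> (\<exists>ps. set ps \<subseteq> S \<and> walk r x ps y)"
  then obtain ps where "x \<in> S" "y \<in> S" "set ps \<subseteq> S" "walk r x ps y" by blast
  then show "(x, y) \<in> {(x, y). x \<in> S \<and> y \<in> S \<and> r x y}\<^sup>+"
  proof (induction ps arbitrary: x)
    case (Cons p ps)
    then show ?case by (auto intro: trancl_into_trancl2)
  qed auto
qed

definition below_on :: "point3 set set \<Rightarrow> point3 set rel" where
  "below_on S = {(X, Y). X \<in> S \<and> Y \<in> S \<and> below X Y}"

lemma acyclic_below_on_iff:
  "acyclic (below_on S) \<longleftrightarrow> (\<forall>x ps. set (x # ps) \<subseteq> S \<longrightarrow> \<not> walk below x ps x)"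
  unfolding acyclic_def below_on_def trancl_iff_walk by auto

lemma acyclic_below_on_if_depth_order:
  assumes "is_depth_order xs S"
  shows "acyclic (below_on S)"
proof -
  define idx where "idx = inv_into {..<length xs} (nth xs)"
  have S: "S = nth xs ` {..<length xs}"
    using assms by (auto simp: is_depth_order_def in_set_conv_nth)
  have idx: "idx X < length xs" "xs ! idx X = X" if "X \<in> S" for X
  proof -
    have X: "X \<in> nth xs ` {..<length xs}" using that S by simp
    show "idx X < length xs" "xs ! idx X = X"
      unfolding idx_def using inv_into_into[OF X] f_inv_into_f[OF X] by auto
  qed
  have ord: "\<forall>i<length xs. \<forall>j<length xs. below (xs ! i) (xs ! j) \<longrightarrow> i < j"
    using assms by (simp add: is_depth_order_def)
  have "idx X < idx Y" if "X \<in> S" "Y \<in> S" "below X Y" for X Y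
    using ord[rule_format, of "idx X" "idx Y"] idx[OF that(1)] idx[OF that(2)] that(3) by simp
  then have "below_on S \<subseteq> inv_image less_than idx" by (auto simp: below_on_def)
  then show ?thesis
    using wf_acyclic[OF wf_inv_image[OF wf_less_than]] acyclic_subset by blast
qed

lemma is_depth_order_Cons:
  assumes xs: "is_depth_order xs (S - {m})" and m: "m \<in> S" "\<forall>X\<in>S. \<not> below X m"
  shows "is_depth_order (m # xs) S"
  unfolding is_depth_order_def
proof (intro conjI allI impI)
  show "distinct (m # xs)" "set (m # xs) = S" using xs m(1) by (auto simp: is_depth_order_def)
  fix i j assume ij: "i < length (m # xs)" "j < length (m # xs)"
    and b: "below ((m # xs) ! i) ((m # xs) ! j)"
  have "(m # xs) ! i \<in> S" using ij(1) nth_mem \<open>set (m # xs) = S\<close> by blast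
  then obtain j' where j: "j = Suc j'" using b m(2) by (cases j) auto
  show "i < j"
  proof (cases i)
    case (Suc i')
    then show ?thesis using xs ij b j by (auto simp: is_depth_order_def)
  qed (simp add: j)
qed

lemma depth_order_if_acyclic:
  assumes "finite S" "acyclic (below_on S)"
  shows "\<exists>xs. is_depth_order xs S"
  using assms
proof (induction S rule: finite_remove_induct)
  case empty
  then show ?case by (auto simp: is_depth_order_def)
next
  case (remove S)
  have "below_on S \<subseteq> S \<times> S" by (auto simp: below_on_def)
  then have "finite (below_on S)" using remove.hyps(1) finite_subset by blast
  then have wf: "wf (below_on S)" using remove.prems by (rule finite_acyclic_wf)
  obtain X where "X \<in> S" using remove.hyps(2) by blast
  then obtain m where m: "m \<in> S" and min: "\<And>X. (X, m) \<in> below_on S \<Longrightarrow> X \<notin> S"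
    by (rule wfE_min[OF wf]) (rule that; blast)
  have "(X, m) \<in> below_on S" if "X \<in> S" "below X m" for X
    using that m by (simp add: below_on_def)
  then have m_min: "\<forall>X\<in>S. \<not> below X m" using min by blast
  have "acyclic (below_on (S - {m}))"
    by (rule acyclic_subset[OF remove.prems]) (auto simp: below_on_def)
  then obtain xs where "is_depth_order xs (S - {m})" using remove.IH[OF m] by blast
  then show ?case using is_depth_order_Cons m m_min by blast
qed

section \<open>Pieces of the triangles and edges in the column\<close>

lemma convex_column: "convex D \<Longrightarrow> convex (column D)"
  unfolding convex_def column_def by (simp add: xy_add_scaleR)

lemma xy_Int_column: "xy ` (X \<inter> column D) = xy ` X \<inter> D"
  unfolding column_def by auto

locale column_setting =
  fixes Vs :: "point3 set set" and D :: "(real \<times> real) set"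
  assumes nonvertical: "V \<in> Vs \<Longrightarrow> nonvertical_triangle V"
    and disjoint: "V \<in> Vs \<Longrightarrow> V' \<in> Vs \<Longrightarrow> V \<noteq> V' \<Longrightarrow> convex hull V \<inter> convex hull V' = {}"
    and convex_D: "convex D"
    and vertices_outside: "V \<in> Vs \<Longrightarrow> V \<inter> column D = {}"
begin

definition triangle_pieces :: "point3 set set" where
  "triangle_pieces = (\<lambda>V. convex hull V \<inter> column D) ` Vs"

definition edge_pieces :: "point3 set set" where
  "edge_pieces = (\<lambda>e. e \<inter> column D) ` edges_of Vs"

definition pieces :: "point3 set set" where
  "pieces = triangle_pieces \<union> edge_pieces"

lemma xy_vertices_outside: "V \<in> Vs \<Longrightarrow> xy ` V \<inter> D = {}"
  using vertices_outside unfolding column_def by blast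

lemma inj_on_triangle:
  assumes "V \<in> Vs"
  shows "inj_on xy (convex hull V)"
proof -
  obtain vt lam where "barycentric V vt lam"
    using nonvertical[OF assms] by (rule barycentric_exists)
  then show ?thesis by (rule barycentric.inj_on_hull)
qed

lemma piece_cases:
  assumes "X \<in> pieces"
  obtains V where "V \<in> Vs" "X \<subseteq> convex hull V \<inter> column D" "convex X"
proof -
  have col: "convex (column D)" using convex_D by (rule convex_column)
  consider (triangle) V where "V \<in> Vs" "X = convex hull V \<inter> column D"
    | (edge) V a b where "V \<in> Vs" "a \<in> V" "b \<in> V" "X = convex hull {a, b} \<inter> column D"
    using assms unfolding pieces_def triangle_pieces_def edge_pieces_def edges_of_def by blast
  then show thesis
  proof cases
    case triangle
    moreover have "convex X" unfolding triangle(2) using col by (intro convex_Int) simp_all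
    ultimately show thesis using that by blast
  next
    case edge
    then have "convex hull {a, b} \<subseteq> convex hull V" by (simp add: hull_mono)
    moreover have "convex X" unfolding edge(4) using col by (intro convex_Int) simp_all
    ultimately show thesis using that edge(1,4) by blast
  qed
qed

lemma
  assumes "X \<in> pieces"
  shows convex_piece: "convex X" and inj_on_piece: "inj_on xy X" and xy_piece_subset: "xy ` X \<subseteq> D"
proof -
  obtain V where V: "V \<in> Vs" "X \<subseteq> convex hull V \<inter> column D" "convex X"
    using assms by (rule piece_cases)
  show "convex X" by (fact V(3))
  show "inj_on xy X" using inj_on_triangle[OF V(1)] V(2) by (meson inj_on_subset le_infE)
  show "xy ` X \<subseteq> D" using V(2) unfolding column_def by blast
qed

lemma meeting_pieces_same_triangle:
  assumes "X \<in> pieces" "Y \<in> pieces" "X \<inter> Y \<noteq> {}"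
  obtains V where "V \<in> Vs" "X \<subseteq> convex hull V \<inter> column D" "Y \<subseteq> convex hull V \<inter> column D"
proof -
  obtain V where V: "V \<in> Vs" "X \<subseteq> convex hull V \<inter> column D"
    using assms(1) by (rule piece_cases)
  obtain V' where V': "V' \<in> Vs" "Y \<subseteq> convex hull V' \<inter> column D"
    using assms(2) by (rule piece_cases)
  have "V = V'"
  proof (rule ccontr)
    assume "V \<noteq> V'"
    then have "convex hull V \<inter> convex hull V' = {}" using disjoint V(1) V'(1) by blast
    then show False using V(2) V'(2) assms(3) by blast
  qed
  then show thesis using that V V' by blast
qed

text \<open>If the heights were not ordered at q, the pieces would intersect, hence lie on a
  common triangle, where no piece is below another.\<close>
lemma below_height_less:
  assumes "X \<in> pieces" "Y \<in> pieces" "below X Y" "q \<in> xy ` X" "q \<in> xy ` Y"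
  shows "height X q < height Y q"
proof (rule ccontr)
  assume "\<not> height X q < height Y q"
  then have "X \<inter> Y \<noteq> {}"
    using meet_if_below_reversed[OF convex_piece[OF assms(1)] inj_on_piece[OF assms(1)]
        convex_piece[OF assms(2)] inj_on_piece[OF assms(2)] assms(3-5)] by simp
  then obtain V where "V \<in> Vs" "X \<subseteq> convex hull V \<inter> column D" "Y \<subseteq> convex hull V \<inter> column D"
    using meeting_pieces_same_triangle assms(1,2) by blast
  then show False using not_below_subsets[OF inj_on_triangle] assms(3) by (meson le_infE)
qed

lemma below_if_height_less:
  assumes "X \<in> pieces" "Y \<in> pieces" "q \<in> xy ` X" "q \<in> xy ` Y" "height X q < height Y q"
  shows "below X Y"
  using below_iff_height[OF inj_on_piece[OF assms(1)] inj_on_piece[OF assms(2)]] assms(3-5)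
  by blast

lemma below_common_point:
  assumes "X \<in> pieces" "Y \<in> pieces" "below X Y"
  obtains q where "q \<in> xy ` X" "q \<in> xy ` Y"
  using below_iff_height[OF inj_on_piece[OF assms(1)] inj_on_piece[OF assms(2)]] assms(3)
  by blast

lemma below_asym:
  assumes "X \<in> pieces" "Y \<in> pieces" "below X Y"
  shows "\<not> below Y X"
proof
  assume "below Y X"
  obtain q where q: "q \<in> xy ` X" "q \<in> xy ` Y" using assms by (rule below_common_point)
  then show False
    using below_height_less[OF assms q] below_height_less[OF assms(2,1) \<open>below Y X\<close> q(2,1)] by simp
qed

lemma below_trans_at_common_point:
  assumes "X \<in> pieces" "Y \<in> pieces" "Z \<in> pieces" "below X Y" "below Y Z"
    and "q \<in> xy ` X" "q \<in> xy ` Y" "q \<in> xy ` Z"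
  shows "below X Z"
  using below_height_less[OF assms(1,2,4,6,7)] below_height_less[OF assms(2,3,5,7,8)]
    below_if_height_less[OF assms(1,3,6,8)] by simp

lemma triangle_piece_meets:
  assumes X: "X \<in> pieces" and t: "t \<in> triangle_pieces" and q: "q \<in> xy ` X" "q \<in> xy ` t"
  shows "below X t \<or> below t X \<or> X \<subseteq> t"
proof -
  have t': "t \<in> pieces" using t by (simp add: pieces_def)
  consider "height X q < height t q" | "height t q < height X q" | "height X q = height t q"
    by linarith
  then show ?thesis
  proof cases
    case 3
    then have "lift X q = lift t q"
      using point3_eqI lift_in(2)[OF inj_on_piece[OF X] q(1)] lift_in(2)[OF inj_on_piece[OF t'] q(2)]
      by metis
    then have "X \<inter> t \<noteq> {}"
      using lift_in(1)[OF inj_on_piece[OF X] q(1)] lift_in(1)[OF inj_on_piece[OF t'] q(2)]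
      by (metis IntI empty_iff)
    with X t' obtain V where V: "V \<in> Vs" "X \<subseteq> convex hull V \<inter> column D" "t \<subseteq> convex hull V \<inter> column D"
      by (rule meeting_pieces_same_triangle)
    obtain V' where V': "V' \<in> Vs" "t = convex hull V' \<inter> column D"
      using t by (auto simp: triangle_pieces_def)
    have "V' = V"
    proof (rule ccontr)
      assume "V' \<noteq> V"
      then have "convex hull V' \<inter> convex hull V = {}" using disjoint V(1) V'(1) by blast
      then show False using V(3) V'(2) q(2) by blast
    qed
    then show ?thesis using V(2) V'(2) by blast
  qed (use below_if_height_less[OF X t' q] below_if_height_less[OF t' X q(2,1)] in blast)+
qed

lemma edge_piece_on_side:
  assumes V: "V \<in> Vs" "barycentric V vt lam" and "i < 3"
  obtains E where "E \<in> edge_pieces" "E \<subseteq> convex hull V \<inter> column D"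
    "\<And>u. u \<in> D \<Longrightarrow> u \<in> xy ` (convex hull V) \<Longrightarrow> lam i u = 0 \<Longrightarrow> u \<in> xy ` E"
proof -
  interpret barycentric V vt lam by (fact V(2))
  obtain a b where ab: "a \<in> V" "b \<in> V" "a \<noteq> b"
    and side: "\<And>p. p \<in> convex hull V \<Longrightarrow> lam i (xy p) = 0 \<Longrightarrow> p \<in> convex hull {a, b}"
    by (rule side_edge[OF \<open>i < 3\<close>]) iprover
  define E where "E = convex hull {a, b} \<inter> column D"
  have "E \<in> edge_pieces"
    using ab V(1) unfolding E_def edge_pieces_def edges_of_def by blast
  moreover have "convex hull {a, b} \<subseteq> convex hull V" using ab by (simp add: hull_mono)
  then have "E \<subseteq> convex hull V \<inter> column D" unfolding E_def by blast
  moreover have "u \<in> xy ` E" if u: "u \<in> D" "u \<in> xy ` (convex hull V)" "lam i u = 0" for u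
  proof -
    obtain p where p: "p \<in> convex hull V" "xy p = u" using u(2) by blast
    then have "p \<in> convex hull {a, b}" using side u(3) by simp
    moreover have "p \<in> column D" using p u(1) by (simp add: column_def)
    ultimately show ?thesis using p(2) unfolding E_def by blast
  qed
  ultimately show thesis by (rule that)
qed

end

locale side_crossing = column_setting Vs D + barycentric V vt lam
  for Vs D V vt lam +
  fixes i :: nat and z :: "real \<times> real"
  assumes triangle: "V \<in> Vs" and side: "i < 3"
    and crossing: "z \<in> D" "z \<in> xy ` (convex hull V)" "lam i z = 0"
begin

lemma side_line_in_triangle: "u \<in> D \<Longrightarrow> lam i u = 0 \<Longrightarrow> u \<in> xy ` (convex hull V)"
  using side_point_in_hull[OF convex_D xy_vertices_outside[OF triangle] side crossing] by blast

lemma piece_crosses_side: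
  assumes "X \<in> pieces" "y \<in> xy ` X" "w \<in> xy ` X" "lam i y < 0" "0 \<le> lam i w"
  obtains u where "u \<in> xy ` X" "u \<in> xy ` (convex hull V)" "lam i u = 0"
proof -
  obtain u where u: "u \<in> xy ` X" "lam i u = 0"
    using affine2_zero_in_convex[OF convex_xy_image[OF convex_piece[OF assms(1)]] affine assms(2-5)]
    by blast
  moreover have "u \<in> D" using u(1) xy_piece_subset[OF assms(1)] by blast
  ultimately show thesis using that side_line_in_triangle by blast
qed

lemma negative_side_step:
  assumes "X \<in> pieces" "Y \<in> pieces" "below X Y" "xy ` X \<inter> xy ` (convex hull V) = {}"
    and "y \<in> xy ` X" "lam i y < 0"
  obtains y' where "y' \<in> xy ` Y" "lam i y' < 0"
proof -
  obtain w where w: "w \<in> xy ` X" "w \<in> xy ` Y" using assms(1-3) by (rule below_common_point)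
  have "lam i w < 0"
  proof (rule ccontr)
    assume "\<not> lam i w < 0"
    then obtain u where "u \<in> xy ` X" "u \<in> xy ` (convex hull V)"
      using piece_crosses_side[OF assms(1,5) w(1) assms(6)] by (metis not_less)
    then show False using assms(4) by blast
  qed
  then show thesis using that w(2) by blast
qed

lemma negative_side_walk:
  assumes "walk below X ps Y" "set (X # ps) \<subseteq> pieces" "Y \<in> pieces"
    and "\<forall>M \<in> set (X # ps). xy ` M \<inter> xy ` (convex hull V) = {}"
    and "y \<in> xy ` X" "lam i y < 0"
  shows "\<exists>y' \<in> xy ` Y. lam i y' < 0"
  using assms
proof (induction ps arbitrary: X y)
  case Nil
  have "X \<in> pieces" "below X Y" "xy ` X \<inter> xy ` (convex hull V) = {}" using Nil.prems by auto
  from negative_side_step[OF this(1) Nil.prems(3) this(2,3) Nil.prems(5,6)] show ?case by blast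
next
  case (Cons M ps)
  have "X \<in> pieces" "M \<in> pieces" "below X M" "xy ` X \<inter> xy ` (convex hull V) = {}"
    using Cons.prems by auto
  from negative_side_step[OF this Cons.prems(5,6)] obtain y' where "y' \<in> xy ` M" "lam i y' < 0" .
  then show ?case using Cons.IH[of M y'] Cons.prems by simp
qed

text \<open>If a piece a below t reaches the negative side of the line, it crosses the side of
  the triangle inside D, so the edge piece on that side is above a; it is below b because
  b is above t at z.\<close>
lemma edge_between:
  assumes t: "t = convex hull V \<inter> column D" and ab: "a \<in> pieces" "b \<in> pieces"
    and below: "below a t" "below t b"
    and "z \<in> xy ` b" and "y \<in> xy ` a" "lam i y < 0"
  obtains E where "E \<in> edge_pieces" "below a E" "below E b"
proof -
  have t': "t \<in> pieces" using triangle t by (auto simp: pieces_def triangle_pieces_def)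
  have inj: "inj_on xy t" using inj_on_piece[OF t'] .
  obtain q where q: "q \<in> xy ` a" "q \<in> xy ` t" using ab(1) t' below(1) by (rule below_common_point)
  have "0 \<le> lam i q" using q(2) side xy_hull_iff unfolding t xy_Int_column by blast
  then obtain w where w: "w \<in> xy ` a" "w \<in> xy ` (convex hull V)" "lam i w = 0"
    using piece_crosses_side[OF ab(1) assms(7) q(1) assms(8)] by blast
  obtain E where E: "E \<in> edge_pieces" "E \<subseteq> t"
    and on_side: "\<And>u. u \<in> D \<Longrightarrow> u \<in> xy ` (convex hull V) \<Longrightarrow> lam i u = 0 \<Longrightarrow> u \<in> xy ` E"
    using edge_piece_on_side[OF triangle barycentric_axioms side] t by blast
  have E': "E \<in> pieces" using E(1) by (simp add: pieces_def)
  have wE: "w \<in> xy ` E" using on_side w xy_piece_subset[OF ab(1)] by blast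
  have zE: "z \<in> xy ` E" using on_side crossing by blast
  have "height a w < height t w"
    using below_height_less[OF ab(1) t' below(1) w(1)] wE E(2) by blast
  then have "below a E"
    using below_if_height_less[OF ab(1) E' w(1) wE] lift_subset[OF inj E(2) wE] by simp
  moreover have "height t z < height b z"
    using below_height_less[OF t' ab(2) below(2) _ assms(6)] zE E(2) by blast
  then have "below E b"
    using below_if_height_less[OF E' ab(2) zE assms(6)] lift_subset[OF inj E(2) zE] by simp
  ultimately show thesis using that E(1) by blast
qed

end

section \<open>Shortening cycles\<close>

context column_setting
begin

lemma exit_along_walk:
  assumes V: "V \<in> Vs" "barycentric V vt lam" and t: "t = convex hull V \<inter> column D"
    and ab: "a \<in> pieces" "b \<in> pieces" "set ms \<subseteq> pieces"
    and walk: "below t b" "walk below b ms a"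
    and avoid: "\<forall>M \<in> set ms. xy ` M \<inter> xy ` t = {}"
    and no_triple: "xy ` a \<inter> xy ` t \<inter> xy ` b = {}"
  obtains i z y where "side_crossing Vs D V vt lam i z" "z \<in> xy ` b" "y \<in> xy ` a" "lam i y < 0"
proof -
  interpret barycentric V vt lam by (fact V(2))
  have t': "t \<in> pieces" using V(1) t by (auto simp: pieces_def triangle_pieces_def)
  have xy_t: "xy ` t = xy ` (convex hull V) \<inter> D" unfolding t by (rule xy_Int_column)
  obtain q where q: "q \<in> xy ` t" "q \<in> xy ` b" using t' ab(2) walk(1) by (rule below_common_point)
  define N where "N = hd (ms @ [a])"
  have "below b N \<and> N \<in> pieces \<and> (N = a \<or> N \<in> set ms)"
    using walk(2) ab by (cases ms) (simp_all add: N_def)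
  then have N: "below b N" "N \<in> pieces" "N = a \<or> N \<in> set ms" by blast+
  obtain y where y: "y \<in> xy ` b" "y \<in> xy ` N" using ab(2) N(2,1) by (rule below_common_point)
  have "y \<notin> xy ` (convex hull V)"
  proof
    assume "y \<in> xy ` (convex hull V)"
    then have "y \<in> xy ` t" using y(1) xy_piece_subset[OF ab(2)] xy_t by blast
    then show False using N(3) avoid no_triple y by blast
  qed
  then obtain i z where i: "i < 3" "z \<in> xy ` b" "z \<in> xy ` (convex hull V)" "lam i z = 0" "lam i y < 0"
    using exit_through_side[OF convex_xy_image[OF convex_piece[OF ab(2)]] q(2) _ y(1)] q(1) xy_t
    by blast
  have "z \<in> D" using i(2) xy_piece_subset[OF ab(2)] by blast
  then interpret side_crossing Vs D V vt lam i z
    using V i by unfold_locales simp_all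
  have "\<exists>y' \<in> xy ` a. lam i y' < 0"
  proof (cases ms)
    case Nil
    then have "N = a" by (simp add: N_def)
    then show ?thesis using y(2) i(5) by blast
  next
    case (Cons M ms')
    have "xy ` X \<inter> xy ` (convex hull V) = {}" if "X \<in> set ms" for X
    proof -
      have "X \<in> pieces" using ab(3) that by blast
      then have "xy ` X \<subseteq> D" by (rule xy_piece_subset)
      then show ?thesis using avoid[rule_format, OF that] xy_t by blast
    qed
    moreover have "walk below M ms' a" "set (M # ms') \<subseteq> pieces" "y \<in> xy ` M"
      using walk(2) ab(3) y(2) Cons by (simp_all add: N_def)
    ultimately show ?thesis
      using negative_side_walk[of M ms' a y] ab(1) i(5) Cons by simp
  qed
  then show thesis using that side_crossing_axioms i(2) by blast
qed

lemma edge_bypass: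
  assumes t: "t \<in> triangle_pieces" and ab: "a \<in> pieces" "b \<in> pieces" "set ms \<subseteq> pieces"
    and walk: "below a t" "below t b" "walk below b ms a"
    and avoid: "\<forall>M \<in> set ms. xy ` M \<inter> xy ` t = {}"
    and no_triple: "xy ` a \<inter> xy ` t \<inter> xy ` b = {}"
  obtains E where "E \<in> edge_pieces" "below a E" "below E b"
proof -
  obtain V where V: "V \<in> Vs" "t = convex hull V \<inter> column D"
    using t by (auto simp: triangle_pieces_def)
  obtain vt lam where bary: "barycentric V vt lam"
    using nonvertical[OF V(1)] by (rule barycentric_exists)
  obtain i z y where crossing: "side_crossing Vs D V vt lam i z"
    and "z \<in> xy ` b" "y \<in> xy ` a" "lam i y < 0"
    using V(1) bary V(2) ab walk(2,3) avoid no_triple by (rule exit_along_walk)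
  from side_crossing.edge_between[OF crossing V(2) ab(1,2) walk(1,2) this(2-4)]
  obtain E where "E \<in> edge_pieces" "below a E" "below E b" .
  then show thesis by (rule that)
qed

definition triangle_count :: "point3 set list \<Rightarrow> nat" where
  "triangle_count c = length (filter (\<lambda>X. X \<notin> edge_pieces) c)"

lemma shortcut_at_member:
  assumes t: "t \<in> triangle_pieces"
    and c: "set (t # us @ M # ws) \<subseteq> pieces" "walk below t (us @ M # ws) t"
    and "us \<noteq> []" "ws \<noteq> []" and "xy ` M \<inter> xy ` t \<noteq> {}"
  obtains x ps where "set (x # ps) \<subseteq> pieces" "walk below x ps x"
    "(x # ps, t # us @ M # ws) \<in> measures [triangle_count, length]"
proof -
  have t': "t \<in> pieces" and M: "M \<in> pieces" using c(1) by auto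
  have w1: "walk below t us M" and w2: "walk below M ws t" using c(2) by (simp_all add: walk_append)
  obtain q where q: "q \<in> xy ` M" "q \<in> xy ` t" using assms(6) by blast
  consider "below M t" | "below t M" | "M \<subseteq> t" using triangle_piece_meets[OF M t q] by blast
  then show thesis
  proof cases
    case 1
    then have "walk below t (us @ [M]) t" using w1 by (simp add: walk_snoc)
    then show thesis using that[of t "us @ [M]"] c(1) assms(5) by (auto simp: triangle_count_def)
  next
    case 2
    then have "walk below t (M # ws) t" using w2 by simp
    then show thesis using that[of t "M # ws"] c(1) assms(4) by (auto simp: triangle_count_def)
  next
    case 3
    obtain N ws' where ws: "ws = N # ws'" using assms(5) by (cases ws) auto
    then have "N \<in> pieces" "below M N" using c w2 by auto
    then have "below t N" using below_subset_left[OF _ _ 3] inj_on_piece t' by blast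
    then have "walk below t (N # ws') t" using w2 ws by simp
    then show thesis using that[of t "N # ws'"] c(1) ws by (auto simp: triangle_count_def)
  qed
qed

lemma smaller_cycle_long:
  assumes t: "t \<in> pieces" "t \<notin> edge_pieces"
    and c: "set (t # b # ms @ [a]) \<subseteq> pieces" "walk below t (b # ms @ [a]) t"
  obtains x ps where "set (x # ps) \<subseteq> pieces" "walk below x ps x"
    "(x # ps, t # b # ms @ [a]) \<in> measures [triangle_count, length]"
proof -
  have tri: "t \<in> triangle_pieces" using t by (simp add: pieces_def)
  have ab: "a \<in> pieces" "b \<in> pieces" "set ms \<subseteq> pieces" using c(1) by auto
  have tb: "below t b" and w: "walk below b ms a" and at: "below a t"
    using c(2) by (simp_all add: walk_snoc)
  show thesis
  proof (cases "xy ` a \<inter> xy ` t \<inter> xy ` b = {}")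
    case False
    then obtain q where "q \<in> xy ` a" "q \<in> xy ` t" "q \<in> xy ` b" by blast
    then have "below a b" using below_trans_at_common_point[OF ab(1) t(1) ab(2) at tb] by blast
    then have "walk below b (ms @ [a]) b" using w by (simp add: walk_snoc)
    then show thesis using that[of b "ms @ [a]"] ab t(2) by (simp add: triangle_count_def)
  next
    case no_triple: True
    show thesis
    proof (cases "\<exists>M \<in> set ms. xy ` M \<inter> xy ` t \<noteq> {}")
      case True
      then obtain us M ws where ms: "ms = us @ M # ws" and meet: "xy ` M \<inter> xy ` t \<noteq> {}"
        by (metis split_list)
      have "set (t # (b # us) @ M # (ws @ [a])) \<subseteq> pieces"
        "walk below t ((b # us) @ M # (ws @ [a])) t"
        using c unfolding ms by simp_all
      moreover have "b # us \<noteq> []" "ws @ [a] \<noteq> []" by simp_all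
      ultimately obtain x ps where "set (x # ps) \<subseteq> pieces" "walk below x ps x"
        "(x # ps, t # (b # us) @ M # (ws @ [a])) \<in> measures [triangle_count, length]"
        using meet by (rule shortcut_at_member[OF tri])
      then show thesis using that ms by simp
    next
      case False
      then have avoid: "\<forall>M \<in> set ms. xy ` M \<inter> xy ` t = {}" by blast
      obtain E where E: "E \<in> edge_pieces" "below a E" "below E b"
        using tri ab at tb w avoid no_triple by (rule edge_bypass)
      then have "walk below E (b # ms @ [a]) E" using w tb by (simp add: walk_snoc)
      then show thesis
        using that[of E "b # ms @ [a]"] E(1) c(1) t(2) by (simp add: triangle_count_def pieces_def)
    qed
  qed
qed

lemma smaller_cycle:
  assumes "t \<notin> edge_pieces" "set (t # ps) \<subseteq> pieces" "walk below t ps t"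
  obtains x ps' where "set (x # ps') \<subseteq> pieces" "walk below x ps' x"
    "(x # ps', t # ps) \<in> measures [triangle_count, length]"
proof -
  have t: "t \<in> pieces" using assms(2) by simp
  consider "ps = []" | b where "ps = [b]" | b ms a where "ps = b # ms @ [a]"
    by (metis append_butlast_last_id list.exhaust)
  then show thesis
  proof cases
    case 1
    then show thesis using assms(3) below_irrefl by simp
  next
    case (2 b)
    then show thesis using assms(2,3) below_asym t by auto
  next
    case (3 b ms a)
    then show thesis using smaller_cycle_long[OF t assms(1)] assms(2,3) that by blast
  qed
qed

lemma rotate_cycle:
  assumes "t \<in> set (x # ps)" "walk below x ps x"
  obtains ps' where "walk below t ps' t" "set (t # ps') = set (x # ps)"
    "triangle_count (t # ps') = triangle_count (x # ps)" "length ps' = length ps"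
proof (cases "t = x")
  case False
  then obtain us vs where ps: "ps = us @ t # vs" using assms(1) by (metis set_ConsD split_list)
  show thesis
  proof (rule that)
    show "walk below t (vs @ x # us) t" using walk_rotate[of below x us t vs] assms(2) ps by simp
    show "set (t # vs @ x # us) = set (x # ps)" "length (vs @ x # us) = length ps" using ps by auto
    show "triangle_count (t # vs @ x # us) = triangle_count (x # ps)"
      using ps by (simp add: triangle_count_def)
  qed
qed (use that assms(2) in blast)

lemma acyclic_pieces:
  assumes "acyclic (below_on edge_pieces)"
  shows "acyclic (below_on pieces)"
proof -
  have "\<not> walk below (hd c) (tl c) (hd c)" if "c \<noteq> []" "set c \<subseteq> pieces" for c
    using that
  proof (induction c rule: wf_induct_rule[OF wf_measures[of "[triangle_count, length]"]])
    case (1 c)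
    obtain x ps where c: "c = x # ps" using "1.prems"(1) by (cases c) auto
    show ?case
    proof
      assume walk: "walk below (hd c) (tl c) (hd c)"
      show False
      proof (cases "set c \<subseteq> edge_pieces")
        case True
        then show False using assms walk c unfolding acyclic_below_on_iff by auto
      next
        case False
        then obtain t where "t \<in> set c" "t \<notin> edge_pieces" by blast
        then obtain ps' where rot: "walk below t ps' t" "set (t # ps') = set c"
          "triangle_count (t # ps') = triangle_count c" "length ps' = length ps"
          using rotate_cycle walk c by (metis list.sel(1,3))
        obtain y qs where "set (y # qs) \<subseteq> pieces" "walk below y qs y"
          "(y # qs, t # ps') \<in> measures [triangle_count, length]"
          using smaller_cycle[OF \<open>t \<notin> edge_pieces\<close> _ rot(1)] rot(2) "1.prems"(2) by metis
        moreover have "(y # qs, c) \<in> measures [triangle_count, length]"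
          using calculation(3) rot(3,4) c by simp
        ultimately show False using "1.IH"[of "y # qs"] by simp
      qed
    qed
  qed
  then show ?thesis unfolding acyclic_below_on_iff by (metis list.distinct(1) list.sel(1,3))
qed

end

theorem proposition1:
  fixes Vs :: "point3 set set" and D :: "(real \<times> real) set"
  assumes "finite Vs"
    and "\<forall>V\<in>Vs. nonvertical_triangle V"
    and "\<forall>V\<in>Vs. \<forall>V'\<in>Vs. V \<noteq> V' \<longrightarrow> convex hull V \<inter> convex hull V' = {}"
    and "open_convex_polygon D"
    and "\<forall>V\<in>Vs. V \<inter> column D = {}"
    and "admits_depth_order ((\<lambda>e. e \<inter> column D) ` edges_of Vs)"
  shows "admits_depth_order ((\<lambda>V. convex hull V \<inter> column D) ` Vs)"
proof -
  have "convex D"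
    using assms(4) unfolding open_convex_polygon_def by (auto intro: convex_interior)
  then interpret column_setting Vs D
    using assms(2,3,5) by unfold_locales auto
  have "acyclic (below_on edge_pieces)"
    using assms(6) acyclic_below_on_if_depth_order
    unfolding admits_depth_order_def edge_pieces_def by blast
  then have "acyclic (below_on pieces)" by (rule acyclic_pieces)
  moreover have "below_on triangle_pieces \<subseteq> below_on pieces"
    by (auto simp: below_on_def pieces_def)
  ultimately have "acyclic (below_on triangle_pieces)" by (rule acyclic_subset)
  moreover have "finite triangle_pieces" using assms(1) by (simp add: triangle_pieces_def)
  ultimately show ?thesis
    using depth_order_if_acyclic unfolding admits_depth_order_def triangle_pieces_def by blast
qed

end
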